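(* Let $P\in\mathbb{R}^{n_x\times n_x}$ and $R\in\mathbb{R}^{n_z\times n_z}$ be symmetric positive definite, let $H\in\mathbb{R}^{n_z\times n_x}$ have full row rank, and let $\bar x\in\mathbb{R}^{n_x}$, $z\in\mathbb{R}^{n_z}$. Let $x_0$ be a random vector in $\mathbb{R}^{n_x}$ with $\mathbb{E}[x_0]=\bar x$ and $\mathrm{Cov}(x_0)=P$. Define the closed-form update $$x_1=\Phi\,x_0+E\,c,\qquad \Phi=I+E\,\Omega\,F^\top,$$ with $E,F,\Omega,c$ as in the context. Then $$\mathbb{E}[x_1]=\bar x+PH^\top(HPH^\top+R)^{-1}(z-H\bar x),\qquad \mathrm{Cov}(x_1)=\Phi P\Phi^\top=P-PH^\top(HPH^\top+R)^{-1}HP,$$ i.e. the update reproduces the Kalman posterior mean and covariance.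
   Context: $R^{-1/2}$ denotes the inverse of the unique symmetric positive definite square root of $R$. Let $D=R^{-1/2}HPH^\top R^{-1/2}\in\mathbb{R}^{n_z\times n_z}$ (symmetric positive definite), with eigendecomposition $D=V\Lambda V^\top$, $V$ orthogonal, $\Lambda=\mathrm{diag}(\alpha_1,\dots,\alpha_{n_z})$, $\alpha_i>0$. Define $E=PH^\top R^{-1/2}V\in\mathbb{R}^{n_x\times n_z}$, $F^\top=V^\top R^{-1/2}H\in\mathbb{R}^{n_z\times n_x}$, $\tilde z=V^\top R^{-1/2}z$, $\tilde x=F^\top\bar x$. Let $\Omega=\mathrm{diag}(\omega_1,\dots,\omega_{n_z})$ with $\omega_i=\big((1+\alpha_i)^{-1/2}-1\big)/\alpha_i$, and $c\in\mathbb{R}^{n_z}$ with $c_i=\dfrac{\alpha_i\tilde z_i+\tilde x_i(1-\sqrt{1+\alpha_i})}{\alpha_i(1+\alpha_i)}$. *)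

theory Defs
  imports "HOL-Analysis.Analysis" "HOL-Probability.Probability"
begin

definition pos_def_matrix :: "real^'n^'n \<Rightarrow> bool" where
  "pos_def_matrix A \<longleftrightarrow> transpose A = A \<and> (\<forall>x. x \<noteq> 0 \<longrightarrow> x \<bullet> (A *v x) > 0)"

definition matrix_sqrt :: "real^'n^'n \<Rightarrow> real^'n^'n" where
  "matrix_sqrt A = (THE S. pos_def_matrix S \<and> S ** S = A)"

definition diag_mat :: "real^'n \<Rightarrow> real^'n^'n" where
  "diag_mat a = (\<chi> i j. if i = j then a $ i else 0)"

definition mean_vec :: "'a measure \<Rightarrow> ('a \<Rightarrow> real^'n) \<Rightarrow> real^'n" where
  "mean_vec M X = integral\<^sup>L M X"

definition cov_mat :: "'a measure \<Rightarrow> ('a \<Rightarrow> real^'n) \<Rightarrow> real^'n^'n" where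
  "cov_mat M X = (\<chi> i j. integral\<^sup>L M
      (\<lambda>w. (X w $ i - mean_vec M X $ i) * (X w $ j - mean_vec M X $ j)))"

definition Rih :: "real^'z^'z \<Rightarrow> real^'z^'z" where
  "Rih R = matrix_inv (matrix_sqrt R)"

definition upd_E :: "real^'x^'x \<Rightarrow> real^'z^'z \<Rightarrow> real^'x^'z \<Rightarrow> real^'z^'z \<Rightarrow> real^'z^'x" where
  "upd_E P R H V = P ** transpose H ** Rih R ** V"

definition upd_Ft :: "real^'z^'z \<Rightarrow> real^'x^'z \<Rightarrow> real^'z^'z \<Rightarrow> real^'x^'z" where
  "upd_Ft R H V = transpose V ** Rih R ** H"

definition upd_Omega :: "real^'z \<Rightarrow> real^'z^'z" where
  "upd_Omega \<alpha> = diag_mat (\<chi> i. (1 / sqrt (1 + \<alpha> $ i) - 1) / \<alpha> $ i)"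

definition upd_c :: "real^'z^'z \<Rightarrow> real^'x^'z \<Rightarrow> real^'z^'z \<Rightarrow> real^'z \<Rightarrow> real^'x \<Rightarrow> real^'z \<Rightarrow> real^'z" where
  "upd_c R H V \<alpha> xbar z =
     (let zt = transpose V *v (Rih R *v z); xt = upd_Ft R H V *v xbar in
      (\<chi> i. (\<alpha> $ i * zt $ i + xt $ i * (1 - sqrt (1 + \<alpha> $ i))) / (\<alpha> $ i * (1 + \<alpha> $ i))))"

definition upd_Phi :: "real^'x^'x \<Rightarrow> real^'z^'z \<Rightarrow> real^'x^'z \<Rightarrow> real^'z^'z \<Rightarrow> real^'z \<Rightarrow> real^'x^'x" where
  "upd_Phi P R H V \<alpha> = mat 1 + upd_E P R H V ** upd_Omega \<alpha> ** upd_Ft R H V"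

end

theory Submission
  imports Defs
begin

text \<open>Whitening by R^{-1/2} and rotating by V decouples the update into scalar ones. With
W = H^T R^{-1/2} V one has E = P W, F^T = W^T and W^T P W = diag(alpha), while
(H P H^T + R)^{-1} = R^{-1/2} V (I + diag alpha)^{-1} V^T R^{-1/2}. Hence the mean identity reduces
to omega_i x + c_i = (z_i - x_i)/(1 + alpha_i) for each coordinate, and, since
Phi P Phi^T = P + P W (2 Omega + Omega diag(alpha) Omega) W^T P, the covariance identity reduces to
2 omega_i + alpha_i omega_i^2 = -1/(1 + alpha_i). For R^{-1/2} to be meaningful one needs existence
and uniqueness of positive definite square roots, which rest on the spectral theorem for symmetric
matrices, obtained by maximising the Rayleigh quotient on invariant subspaces.\<close>

section \<open>Spectral theorem for real symmetric matrices\<close>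

lemma symmetric_matrix_inner_commute:
  fixes A :: "real^'n^'n"
  assumes "transpose A = A"
  shows "x \<bullet> (A *v y) = (A *v x) \<bullet> y"
  by (metis assms dot_lmul_matrix vector_transpose_matrix)

lemma linear_coeff_eq_0_if_quadratic_nonneg:
  fixes a b :: real
  assumes nonneg: "\<And>t. 0 \<le> t * a + t^2 * b"
  shows "a = 0"
proof (rule ccontr)
  assume "a \<noteq> 0"
  define k where "k = \<bar>b\<bar> + 1"
  have k: "k > 0" "b \<le> k - 1" unfolding k_def by auto
  have "k^2 * ((- a / k) * a + (- a / k)^2 * b) = a^2 * (b - k)"
    using k by (simp add: field_simps power2_eq_square)
  also have "\<dots> < 0"
    using k \<open>a \<noteq> 0\<close> by (simp add: mult_pos_neg)
  moreover have "0 \<le> k^2 * ((- a / k) * a + (- a / k)^2 * b)"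
    using nonneg[of "- a / k"] by simp
  ultimately show False
    by linarith
qed

lemma rayleigh_quotient_attains_max:
  fixes A :: "real^'n^'n"
  assumes W: "subspace W" "W \<noteq> {0}"
  obtains v where "v \<in> W" "norm v = 1"
    and "\<And>y. y \<in> W \<Longrightarrow> y \<bullet> (A *v y) \<le> (v \<bullet> (A *v v)) * (y \<bullet> y)"
proof -
  let ?K = "W \<inter> sphere 0 1"
  let ?f = "\<lambda>x. x \<bullet> (A *v x)"
  obtain x where x: "x \<in> W" "x \<noteq> 0"
    using W subspace_0 by blast
  have "x /\<^sub>R norm x \<in> ?K"
    using x W by (simp add: subspace_scale)
  moreover have "compact ?K"
    by (rule closed_Int_compact[OF closed_subspace[OF W(1)] compact_sphere])
  moreover have "continuous_on ?K ?f"
    by (intro continuous_on_inner continuous_on_id linear_continuous_on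
        matrix_vector_mul_bounded_linear)
  ultimately obtain v where v: "v \<in> ?K" and vmax: "\<And>y. y \<in> ?K \<Longrightarrow> ?f y \<le> ?f v"
    using continuous_attains_sup[of ?K ?f] by blast
  have "?f y \<le> ?f v * (y \<bullet> y)" if "y \<in> W" for y
  proof (cases "y = 0")
    case False
    have "?f (y /\<^sub>R norm y) \<le> ?f v"
      using that W False by (intro vmax) (simp add: subspace_scale)
    moreover have "?f (y /\<^sub>R norm y) = ?f y / (y \<bullet> y)"
      by (simp add: matrix_vector_mult_scaleR power2_norm_eq_inner[symmetric] power2_eq_square
          field_simps)
    ultimately show ?thesis
      using False by (simp add: divide_le_eq)
  qed simp
  with v show thesis
    by (intro that[of v]) auto
qed

lemma symmetric_matrix_eigenvector_in_invariant_subspace: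
  fixes A :: "real^'n^'n"
  assumes sym: "transpose A = A" and W: "subspace W" "W \<noteq> {0}"
    and invariant: "\<And>x. x \<in> W \<Longrightarrow> A *v x \<in> W"
  obtains v l where "v \<in> W" "norm v = 1" "A *v v = l *\<^sub>R v"
proof -
  obtain v where v: "v \<in> W" "norm v = 1"
    and vmax: "\<And>y. y \<in> W \<Longrightarrow> y \<bullet> (A *v y) \<le> (v \<bullet> (A *v v)) * (y \<bullet> y)"
    using rayleigh_quotient_attains_max[OF W] by blast
  (* Perturbing the maximiser v inside W along u = l v - A v changes the Rayleigh quotient to
     first order by 2 t |u|^2, which must therefore vanish. *)
  define l where "l = v \<bullet> (A *v v)"
  define u where "u = l *\<^sub>R v - A *v v"
  have u: "u \<in> W"
    using v W invariant unfolding u_def by (simp add: subspace_diff subspace_scale)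
  have "0 \<le> t * (2 * (u \<bullet> u)) + t^2 * (l * (u \<bullet> u) - u \<bullet> (A *v u))" for t
  proof -
    have "v + t *\<^sub>R u \<in> W"
      using v u W by (simp add: subspace_add subspace_scale)
    then have "0 \<le> l * ((v + t *\<^sub>R u) \<bullet> (v + t *\<^sub>R u)) - (v + t *\<^sub>R u) \<bullet> (A *v (v + t *\<^sub>R u))"
      using vmax unfolding l_def by fastforce
    also have "\<dots> = (l * (v \<bullet> v) - v \<bullet> (A *v v)) + 2 * t * (l * (u \<bullet> v) - u \<bullet> (A *v v))
        + t^2 * (l * (u \<bullet> u) - u \<bullet> (A *v u))"
      using symmetric_matrix_inner_commute[OF sym, of v u]
      by (simp add: matrix_vector_right_distrib matrix_vector_mult_scaleR inner_add_left
          inner_add_right inner_commute[of v u] inner_commute[of "A *v v" u] algebra_simps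
          power2_eq_square)
    also have "l * (u \<bullet> v) - u \<bullet> (A *v v) = u \<bullet> u"
      unfolding u_def by (simp add: inner_diff_right)
    finally show ?thesis
      using v(2) by (simp add: l_def norm_eq_1 algebra_simps)
  qed
  then have "u \<bullet> u = 0"
    using linear_coeff_eq_0_if_quadratic_nonneg by fastforce
  then have "A *v v = l *\<^sub>R v"
    unfolding u_def by simp
  with v that show thesis by blast
qed

definition orthonormal_eigenvectors :: "real^'n^'n \<Rightarrow> (real^'n) set \<Rightarrow> bool" where
  "orthonormal_eigenvectors A S \<longleftrightarrow>
     pairwise orthogonal S \<and> (\<forall>v\<in>S. norm v = 1 \<and> (\<exists>c. A *v v = c *\<^sub>R v))"

lemma orthonormal_eigenvectors_finite_card:
  fixes A :: "real^'n^'n"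
  assumes "orthonormal_eigenvectors A S"
  shows "finite S" "card S \<le> CARD('n)"
proof -
  have "independent S"
    using assms pairwise_orthogonal_independent unfolding orthonormal_eigenvectors_def
    by fastforce
  then show "finite S" "card S \<le> CARD('n)"
    using independent_bound by fastforce+
qed

text \<open>The orthogonal complement of a set of eigenvectors is invariant, so a non-spanning
  orthonormal set of eigenvectors can be extended; a maximal one is therefore a basis.\<close>

lemma orthonormal_eigenvectors_extend:
  fixes A :: "real^'n^'n"
  assumes sym: "transpose A = A" and S: "orthonormal_eigenvectors A S" and "span S \<noteq> UNIV"
  obtains v where "v \<notin> S" "orthonormal_eigenvectors A (insert v S)"
proof -
  obtain a where a: "a \<noteq> 0" "\<And>x. x \<in> span S \<Longrightarrow> a \<bullet> x = 0"
    using span_not_UNIV_orthogonal[OF \<open>span S \<noteq> UNIV\<close>] by blast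
  let ?W = "{y. \<forall>x\<in>S. orthogonal x y}"
  have "a \<in> ?W"
    using a span_base by (auto simp: orthogonal_def inner_commute)
  then have W: "subspace ?W" "?W \<noteq> {0}"
    using a(1) subspace_orthogonal_to_vectors by auto
  have "A *v y \<in> ?W" if y: "y \<in> ?W" for y
  proof -
    have "orthogonal x (A *v y)" if "x \<in> S" for x
    proof -
      obtain c where "A *v x = c *\<^sub>R x"
        using S \<open>x \<in> S\<close> unfolding orthonormal_eigenvectors_def by blast
      then have "x \<bullet> (A *v y) = c * (x \<bullet> y)"
        by (simp add: symmetric_matrix_inner_commute[OF sym, of x y])
      then show ?thesis
        using y that by (simp add: orthogonal_def)
    qed
    then show ?thesis by simp
  qed
  then obtain v l where v: "v \<in> ?W" "norm v = 1" "A *v v = l *\<^sub>R v"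
    using symmetric_matrix_eigenvector_in_invariant_subspace[OF sym W] by blast
  have "v \<notin> S"
  proof
    assume "v \<in> S"
    then have "orthogonal v v"
      using v(1) by simp
    then show False
      using v(2) by (simp add: orthogonal_self)
  qed
  moreover have "orthonormal_eigenvectors A (insert v S)"
    using S v unfolding orthonormal_eigenvectors_def pairwise_insert
    by (auto simp: orthogonal_commute)
  ultimately show thesis
    by (rule that)
qed

theorem symmetric_matrix_orthonormal_eigenbasis:
  fixes A :: "real^'n^'n"
  assumes sym: "transpose A = A"
  obtains B where "orthonormal_eigenvectors A B" "finite B" "span B = UNIV"
proof -
  have "orthonormal_eigenvectors A {}"
    by (simp add: orthonormal_eigenvectors_def)
  moreover have "\<forall>T. orthonormal_eigenvectors A T \<longrightarrow> card T < Suc CARD('n)"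
    using orthonormal_eigenvectors_finite_card(2)[of A] by (simp add: less_Suc_eq_le)
  ultimately have "\<exists>S. orthonormal_eigenvectors A S \<and>
      (\<forall>T. orthonormal_eigenvectors A T \<longrightarrow> card T \<le> card S)"
    by (rule ex_has_greatest_nat)
  then obtain S where S: "orthonormal_eigenvectors A S"
    and S_max: "\<forall>T. orthonormal_eigenvectors A T \<longrightarrow> card T \<le> card S"
    by blast
  have fin: "finite S"
    using S by (rule orthonormal_eigenvectors_finite_card)
  have "span S = UNIV"
  proof (rule ccontr)
    assume "span S \<noteq> UNIV"
    then obtain v where "v \<notin> S" "orthonormal_eigenvectors A (insert v S)"
      using orthonormal_eigenvectors_extend[OF sym S] by blast
    then show False
      using S_max fin by auto
  qed
  with S fin that show thesis by blast
qed

lemma orthonormal_eigenvectors_eigenvalue: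
  assumes "orthonormal_eigenvectors A B" "v \<in> B"
  shows "A *v v = (v \<bullet> (A *v v)) *\<^sub>R v"
proof -
  obtain c where c: "A *v v = c *\<^sub>R v" and "norm v = 1"
    using assms unfolding orthonormal_eigenvectors_def by blast
  then have "v \<bullet> (A *v v) = c"
    by (simp add: norm_eq_1)
  with c show ?thesis
    by simp
qed

lemma inner_orthonormal_sum:
  assumes "pairwise orthogonal B" "\<And>v. v \<in> B \<Longrightarrow> norm v = 1" "finite B" "w \<in> B"
  shows "w \<bullet> (\<Sum>v\<in>B. c v *\<^sub>R v) = c w"
proof -
  have "w \<bullet> (\<Sum>v\<in>B. c v *\<^sub>R v) = (\<Sum>v\<in>B. if v = w then c v else 0)"
    unfolding inner_sum_right
    using assms by (intro sum.cong) (auto simp: pairwise_def orthogonal_def norm_eq_1)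
  also have "\<dots> = c w"
    using assms by (simp add: sum.delta')
  finally show ?thesis .
qed

definition spectral_matrix :: "(real^'n) set \<Rightarrow> (real^'n \<Rightarrow> real) \<Rightarrow> real^'n^'n" where
  "spectral_matrix B f = (\<chi> i j. \<Sum>v\<in>B. f v * (v $ i * v $ j))"

lemma spectral_matrix_mult_vector:
  "spectral_matrix B f *v x = (\<Sum>v\<in>B. (f v * (x \<bullet> v)) *\<^sub>R v)"
  unfolding spectral_matrix_def
  by (simp add: vec_eq_iff matrix_vector_mult_def inner_vec_def sum_distrib_left
      sum_distrib_right sum.swap[of _ B UNIV] mult_ac)

lemma spectral_matrix_cong:
  assumes "\<And>v. v \<in> B \<Longrightarrow> f v = g v"
  shows "spectral_matrix B f = spectral_matrix B g"
  unfolding spectral_matrix_def using assms by (auto simp: vec_eq_iff intro!: sum.cong)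

lemma transpose_spectral_matrix: "transpose (spectral_matrix B f) = spectral_matrix B f"
  unfolding spectral_matrix_def by (simp add: transpose_def vec_eq_iff mult.commute)

lemma spectral_matrix_mult:
  assumes "pairwise orthogonal B" "\<And>v. v \<in> B \<Longrightarrow> norm v = 1" "finite B"
  shows "spectral_matrix B f ** spectral_matrix B g = spectral_matrix B (\<lambda>v. f v * g v)"
proof -
  have "(spectral_matrix B g *v x) \<bullet> v = g v * (x \<bullet> v)" if "v \<in> B" for x v
    using inner_orthonormal_sum[OF assms that]
    by (simp add: spectral_matrix_mult_vector inner_commute)
  then show ?thesis
    by (simp add: matrix_eq matrix_vector_mul_assoc[symmetric] spectral_matrix_mult_vector
        mult.assoc cong: sum.cong)
qed

lemma spectral_matrix_eigenbasis:
  assumes B: "orthonormal_eigenvectors A B" "finite B" "span B = UNIV"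
  shows "A = spectral_matrix B (\<lambda>v. v \<bullet> (A *v v))"
proof -
  have orth: "pairwise orthogonal B" and unit: "\<And>v. v \<in> B \<Longrightarrow> norm v = 1"
    using B(1) unfolding orthonormal_eigenvectors_def by auto
  have "A *v x = spectral_matrix B (\<lambda>v. v \<bullet> (A *v v)) *v x" for x
  proof -
    have "A *v x = A *v (\<Sum>v\<in>B. (x \<bullet> v) *\<^sub>R v)"
      using orthonormal_basis_expand[OF orth unit _ B(2), of x] B(3) by simp
    also have "\<dots> = (\<Sum>v\<in>B. (x \<bullet> v) *\<^sub>R (A *v v))"
      by (simp add: linear_sum[OF matrix_vector_mul_linear] matrix_vector_mult_scaleR)
    also have "\<dots> = (\<Sum>v\<in>B. (x \<bullet> v) *\<^sub>R ((v \<bullet> (A *v v)) *\<^sub>R v))"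
      using orthonormal_eigenvectors_eigenvalue[OF B(1)] by (intro sum.cong refl) metis
    finally show ?thesis
      by (simp add: spectral_matrix_mult_vector mult.commute)
  qed
  then show ?thesis
    using matrix_eq by blast
qed

lemma pos_def_spectral_matrix:
  fixes B :: "(real^'n) set"
  assumes orth: "pairwise orthogonal B" and unit: "\<And>v. v \<in> B \<Longrightarrow> norm v = 1"
    and B: "finite B" "span B = UNIV" and pos: "\<And>v. v \<in> B \<Longrightarrow> f v > 0"
  shows "pos_def_matrix (spectral_matrix B f)"
  unfolding pos_def_matrix_def
proof (intro conjI allI impI transpose_spectral_matrix)
  fix x :: "real^'n"
  assume "x \<noteq> 0"
  have "\<exists>w\<in>B. x \<bullet> w \<noteq> 0"
  proof (rule ccontr)
    assume "\<not> ?thesis"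
    then have "(\<Sum>v\<in>B. (x \<bullet> v) *\<^sub>R v) = 0"
      by simp
    with orthonormal_basis_expand[OF orth unit _ B(1), of x] B(2) \<open>x \<noteq> 0\<close> show False
      by simp
  qed
  then obtain w where w: "w \<in> B" "x \<bullet> w \<noteq> 0"
    by blast
  have "0 < f w * (x \<bullet> w)^2"
    using pos[OF w(1)] w(2) by simp
  also have "\<dots> \<le> (\<Sum>v\<in>B. f v * (x \<bullet> v)^2)"
    using B(1) w(1) pos by (intro member_le_sum) (auto simp: less_imp_le)
  also have "\<dots> = x \<bullet> (spectral_matrix B f *v x)"
    unfolding spectral_matrix_mult_vector
    by (simp add: inner_sum_right power2_eq_square mult.assoc)
  finally show "x \<bullet> (spectral_matrix B f *v x) > 0" .
qed

section \<open>Square roots of positive definite matrices\<close>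

lemma pos_def_matrix_sqrt_exists:
  fixes R :: "real^'n^'n"
  assumes R: "pos_def_matrix R"
  obtains S where "pos_def_matrix S" "S ** S = R"
proof -
  obtain B where B: "orthonormal_eigenvectors R B" "finite B" "span B = UNIV"
    using R symmetric_matrix_orthonormal_eigenbasis unfolding pos_def_matrix_def by blast
  have orth: "pairwise orthogonal B" and unit: "\<And>v. v \<in> B \<Longrightarrow> norm v = 1"
    using B(1) unfolding orthonormal_eigenvectors_def by auto
  define l where "l v = v \<bullet> (R *v v)" for v
  have l_pos: "l v > 0" if "v \<in> B" for v
  proof -
    have "v \<noteq> 0"
      using unit[OF that] by auto
    then show ?thesis
      using R unfolding pos_def_matrix_def l_def by blast
  qed
  define S where "S = spectral_matrix B (\<lambda>v. sqrt (l v))"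
  have "S ** S = spectral_matrix B (\<lambda>v. sqrt (l v) * sqrt (l v))"
    unfolding S_def by (rule spectral_matrix_mult[OF orth unit B(2)])
  also have "\<dots> = spectral_matrix B l"
    using l_pos by (intro spectral_matrix_cong) (simp add: less_imp_le)
  also have "\<dots> = R"
    unfolding l_def by (rule spectral_matrix_eigenbasis[OF B, symmetric])
  finally have "S ** S = R" .
  moreover have "pos_def_matrix S"
    unfolding S_def using l_pos real_sqrt_gt_zero
    by (blast intro: pos_def_spectral_matrix[OF orth unit B(2,3)])
  ultimately show thesis
    by (rule that[rotated])
qed

lemma matrix_diff_ldistrib: "A ** (B - C) = A ** B - A ** (C :: 'a::ring_1^_^_)"
  by (vector matrix_matrix_mult_def sum_subtractf[symmetric] field_simps)

lemma matrix_diff_rdistrib: "(B - C) ** A = B ** A - C ** (A :: 'a::ring_1^_^_)"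
  by (vector matrix_matrix_mult_def sum_subtractf[symmetric] field_simps)

lemma pos_def_sylvester_eq_0:
  fixes S1 S2 D :: "real^'n^'n"
  assumes S1: "pos_def_matrix S1" and S2: "pos_def_matrix S2" and D_sym: "transpose D = D"
    and sylvester: "S1 ** D + D ** S2 = 0"
  shows "D = 0"
proof -
  obtain B where B: "orthonormal_eigenvectors D B" "finite B" "span B = UNIV"
    using symmetric_matrix_orthonormal_eigenbasis[OF D_sym] by blast
  have "v \<bullet> (D *v v) = 0" if v: "v \<in> B" for v
  proof -
    define c where "c = v \<bullet> (D *v v)"
    have c: "D *v v = c *\<^sub>R v"
      unfolding c_def by (rule orthonormal_eigenvectors_eigenvalue[OF B(1) v])
    have "v \<bullet> (S1 *v (D *v v)) + (D *v v) \<bullet> (S2 *v v) = v \<bullet> ((S1 ** D + D ** S2) *v v)"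
      using symmetric_matrix_inner_commute[OF D_sym, of v "S2 *v v"]
      by (simp add: matrix_vector_mult_add_rdistrib matrix_vector_mul_assoc[symmetric]
          inner_add_right)
    also have "\<dots> = 0"
      unfolding sylvester by simp
    finally have "c * (v \<bullet> (S1 *v v) + v \<bullet> (S2 *v v)) = 0"
      by (simp add: c matrix_vector_mult_scaleR algebra_simps)
    moreover have "v \<bullet> (S1 *v v) + v \<bullet> (S2 *v v) > 0"
    proof -
      have "v \<noteq> 0"
        using B(1) v unfolding orthonormal_eigenvectors_def by auto
      with S1 S2 show ?thesis
        unfolding pos_def_matrix_def by (simp add: add_pos_pos)
    qed
    ultimately show ?thesis
      unfolding c_def by simp
  qed
  then have "spectral_matrix B (\<lambda>v. v \<bullet> (D *v v)) = spectral_matrix B (\<lambda>v. 0)"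
    by (rule spectral_matrix_cong)
  then show "D = 0"
    unfolding spectral_matrix_eigenbasis[OF B, symmetric]
    by (simp add: spectral_matrix_def vec_eq_iff)
qed

lemma pos_def_matrix_sqrt_unique:
  fixes S1 S2 :: "real^'n^'n"
  assumes S1: "pos_def_matrix S1" and S2: "pos_def_matrix S2" and eq: "S1 ** S1 = S2 ** S2"
  shows "S1 = S2"
proof -
  have "S1 ** (S1 - S2) + (S1 - S2) ** S2 = 0"
    using eq by (simp add: matrix_diff_ldistrib matrix_diff_rdistrib)
  moreover have "transpose (S1 - S2) = S1 - S2"
    using S1 S2 unfolding pos_def_matrix_def by (simp add: transpose_def vec_eq_iff)
  ultimately have "S1 - S2 = 0"
    using pos_def_sylvester_eq_0[OF S1 S2] by blast
  then show ?thesis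
    by simp
qed

lemma matrix_sqrt_spec:
  assumes "pos_def_matrix R"
  shows "pos_def_matrix (matrix_sqrt R) \<and> matrix_sqrt R ** matrix_sqrt R = R"
proof -
  have "\<exists>!S. pos_def_matrix S \<and> S ** S = R"
    using pos_def_matrix_sqrt_exists[OF assms] pos_def_matrix_sqrt_unique by metis
  then show ?thesis
    unfolding matrix_sqrt_def by (rule theI')
qed

lemma pos_def_matrix_invertible:
  fixes S :: "real^'n^'n"
  assumes "pos_def_matrix S"
  shows "invertible S"
proof -
  have "inj ((*v) S)"
  proof (rule injI)
    fix x y
    assume "S *v x = S *v y"
    then have "(x - y) \<bullet> (S *v (x - y)) = 0"
      by (simp add: matrix_vector_mult_diff_distrib)
    then have "\<not> x - y \<noteq> 0"
      using assms unfolding pos_def_matrix_def by (metis less_irrefl)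
    then show "x = y"
      by simp
  qed
  then show ?thesis
    using matrix_left_invertible_injective invertible_left_inverse by blast
qed

lemma invertible_matrix_inv:
  fixes A :: "'a::semiring_1^'n^'m"
  assumes "invertible A"
  shows "A ** matrix_inv A = mat 1" "matrix_inv A ** A = mat 1"
  using someI_ex[OF assms[unfolded invertible_def]] unfolding matrix_inv_def by auto

lemma matrix_mul_cancel_right:
  assumes "B ** C = mat 1"
  shows "A ** B ** C = A"
  by (metis assms matrix_mul_assoc matrix_mul_rid)

lemma matrix_inv_eqI:
  fixes A B :: "real^'n^'n"
  assumes "A ** B = mat 1"
  shows "matrix_inv A = B"
proof -
  have "invertible A"
    using assms invertible_right_inverse by blast
  then have "matrix_inv A ** A = mat 1"
    by (rule invertible_matrix_inv)
  then show ?thesis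
    by (metis assms matrix_mul_assoc matrix_mul_lid matrix_mul_rid)
qed

lemma matrix_inv_symmetric:
  fixes A :: "real^'n^'n"
  assumes "invertible A" "transpose A = A"
  shows "transpose (matrix_inv A) = matrix_inv A"
proof -
  have "A ** transpose (matrix_inv A) = mat 1"
    using arg_cong[OF invertible_matrix_inv(2)[OF assms(1)], of transpose] assms(2)
    by (simp add: matrix_transpose_mul)
  then show ?thesis
    using matrix_inv_eqI by metis
qed

lemma Rih_inverse_sqrt:
  assumes "pos_def_matrix R"
  shows "matrix_sqrt R ** Rih R = mat 1" "Rih R ** matrix_sqrt R = mat 1"
    and "transpose (Rih R) = Rih R"
proof -
  have S: "pos_def_matrix (matrix_sqrt R)"
    using matrix_sqrt_spec[OF assms] by blast
  then have "invertible (matrix_sqrt R)"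
    by (rule pos_def_matrix_invertible)
  then show "matrix_sqrt R ** Rih R = mat 1" "Rih R ** matrix_sqrt R = mat 1"
    and "transpose (Rih R) = Rih R"
    using invertible_matrix_inv matrix_inv_symmetric S unfolding Rih_def pos_def_matrix_def
    by auto
qed

section \<open>Matrix algebra of the update\<close>

lemma matrix_add_rdistrib: "(B + C) ** A = B ** A + C ** A"
  by (vector matrix_matrix_mult_def sum.distrib[symmetric] field_simps)

lemma matrix_mul_uminus_left: "(- A) ** B = - (A ** B :: 'a::ring_1^_^_)"
  unfolding matrix_matrix_mult_def by (simp add: vec_eq_iff sum_negf)

lemma matrix_mul_uminus_right: "A ** (- B) = - (A ** B :: 'a::ring_1^_^_)"
  unfolding matrix_matrix_mult_def by (simp add: vec_eq_iff sum_negf)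

lemma transpose_add: "transpose (A + B) = transpose A + transpose B"
  by (simp add: transpose_def vec_eq_iff)

lemma diag_mat_mult: "diag_mat a ** diag_mat b = diag_mat (a * b)"
  unfolding diag_mat_def matrix_matrix_mult_def
  by (simp add: vec_eq_iff if_distribR mult_delta_left sum.delta')

lemma diag_mat_mult_vector: "diag_mat a *v x = a * x"
  unfolding diag_mat_def matrix_vector_mult_def
  by (simp add: vec_eq_iff mult_delta_left sum.delta')

lemma diag_mat_add: "diag_mat a + diag_mat b = diag_mat (a + b)"
  by (simp add: diag_mat_def vec_eq_iff)

lemma diag_mat_uminus: "- diag_mat a = diag_mat (- a)"
  by (simp add: diag_mat_def vec_eq_iff)

lemma diag_mat_one: "diag_mat 1 = mat 1"
  by (simp add: diag_mat_def mat_def vec_eq_iff)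

lemma transpose_diag_mat: "transpose (diag_mat a) = diag_mat a"
  by (simp add: diag_mat_def transpose_def vec_eq_iff)

lemma matrix_inv_congruent_diag_sum:
  fixes G R S T V :: "real^'n^'n"
  assumes ST: "S ** T = mat 1" and TS: "T ** S = mat 1" and SS: "S ** S = R"
    and V: "orthogonal_matrix V"
    and G: "T ** G ** T = V ** diag_mat a ** transpose V"
    and a: "\<And>i. 1 + a $ i \<noteq> 0"
  shows "matrix_inv (G + R) = T ** V ** diag_mat (\<chi> i. 1 / (1 + a $ i)) ** transpose V ** T"
proof (rule matrix_inv_eqI)
  have VV: "transpose V ** V = mat 1" "V ** transpose V = mat 1"
    using V unfolding orthogonal_matrix_def by auto
  have "G = S ** (T ** G ** T) ** S"
    by (simp add: matrix_mul_assoc matrix_mul_cancel_right[OF TS] ST)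
  then have G': "G = S ** V ** diag_mat a ** transpose V ** S"
    unfolding G by (simp add: matrix_mul_assoc)
  have R': "R = S ** V ** diag_mat 1 ** transpose V ** S"
    using SS VV by (simp add: diag_mat_one matrix_mul_cancel_right)
  have "G + R = S ** V ** (diag_mat a + diag_mat 1) ** transpose V ** S"
    unfolding G' R' by (simp only: matrix_add_ldistrib matrix_add_rdistrib)
  then have "G + R = S ** V ** diag_mat (1 + a) ** transpose V ** S"
    by (simp add: diag_mat_add add.commute)
  moreover have "diag_mat (1 + a) ** diag_mat (\<chi> i. 1 / (1 + a $ i)) = mat 1"
    unfolding diag_mat_mult diag_mat_one[symmetric] using a
    by (intro arg_cong[where f = diag_mat]) (simp add: vec_eq_iff)
  ultimately show "(G + R) ** (T ** V ** diag_mat (\<chi> i. 1 / (1 + a $ i)) ** transpose V ** T) = mat 1"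
    by (simp add: matrix_mul_assoc matrix_mul_cancel_right ST VV)
qed

lemma low_rank_update_congruence:
  fixes P :: "real^'n^'n" and W :: "real^'m^'n" and Om L K :: "real^'m^'m"
  assumes P: "transpose P = P" and Om: "transpose Om = Om"
    and L: "transpose W ** P ** W = L" and quadratic: "Om + Om + Om ** L ** Om = - K"
  shows "(mat 1 + P ** W ** Om ** transpose W) ** P ** transpose (mat 1 + P ** W ** Om ** transpose W)
    = P - P ** W ** K ** transpose W ** P"
proof -
  have L': "X ** transpose W ** P ** W = X ** L" for X :: "real^'m^'n"
    using L by (simp add: matrix_mul_assoc[symmetric])
  have "transpose (mat 1 + P ** W ** Om ** transpose W) = mat 1 + W ** Om ** transpose W ** P"
    by (simp add: transpose_add matrix_transpose_mul P Om matrix_mul_assoc)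
  then have "(mat 1 + P ** W ** Om ** transpose W) ** P ** transpose (mat 1 + P ** W ** Om ** transpose W)
      = P + P ** W ** (Om + Om + Om ** L ** Om) ** transpose W ** P"
    by (simp only: matrix_add_ldistrib matrix_add_rdistrib matrix_mul_assoc L' add.assoc
        matrix_mul_lid matrix_mul_rid)
  also have "\<dots> = P - P ** W ** K ** transpose W ** P"
    unfolding quadratic by (simp add: matrix_mul_uminus_left matrix_mul_uminus_right)
  finally show ?thesis .
qed

lemma update_gain_mean_scalar:
  fixes a x y :: real
  assumes "a > 0"
  shows "(1 / sqrt (1 + a) - 1) / a * x + (a * y + x * (1 - sqrt (1 + a))) / (a * (1 + a))
    = (y - x) / (1 + a)"
proof -
  define s where "s = sqrt (1 + a)"
  have s: "s \<noteq> 0" "1 + a = s * s"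
    using assms unfolding s_def by auto
  have "(1 / s - 1) / a * x + (a * y + x * (1 - s)) / (a * (s * s))
      = ((1 - s) * s * x + a * y + x * (1 - s)) / (a * (s * s))"
    using assms s(1) by (simp add: field_simps)
  also have "(1 - s) * s * x + a * y + x * (1 - s) = a * y + x * (1 - s * s)"
    by (simp add: algebra_simps)
  also have "\<dots> = a * (y - x)"
    unfolding s(2)[symmetric] by (simp add: algebra_simps)
  also have "a * (y - x) / (a * (s * s)) = (y - x) / (s * s)"
    using assms by simp
  finally show ?thesis
    unfolding s_def[symmetric] unfolding s(2) .
qed

lemma update_gain_cov_scalar:
  fixes a :: real
  assumes "a > 0"
  shows "2 * ((1 / sqrt (1 + a) - 1) / a) + ((1 / sqrt (1 + a) - 1) / a)^2 * a = - 1 / (1 + a)"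
proof -
  define s where "s = sqrt (1 + a)"
  have s: "s \<noteq> 0" "1 + a = s * s"
    using assms unfolding s_def by auto
  have "2 * ((1 / s - 1) / a) + ((1 / s - 1) / a)^2 * a
      = (2 * (1 - s) * s + (1 - s) * (1 - s)) / (a * (s * s))"
    using assms s(1) by (simp add: field_simps power2_eq_square)
  also have "2 * (1 - s) * s + (1 - s) * (1 - s) = 1 - s * s"
    by (simp add: algebra_simps)
  also have "\<dots> = - a"
    unfolding s(2)[symmetric] by simp
  also have "- a / (a * (s * s)) = - 1 / (s * s)"
    using assms by simp
  finally show ?thesis
    unfolding s_def[symmetric] unfolding s(2) .
qed

lemma upd_Omega_quadratic:
  assumes "\<And>i. \<alpha> $ i > 0"
  shows "upd_Omega \<alpha> + upd_Omega \<alpha> + upd_Omega \<alpha> ** diag_mat \<alpha> ** upd_Omega \<alpha>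
    = - diag_mat (\<chi> i. 1 / (1 + \<alpha> $ i))"
  unfolding upd_Omega_def diag_mat_mult diag_mat_add diag_mat_uminus
  using update_gain_cov_scalar[OF assms]
  by (intro arg_cong[where f = diag_mat]) (simp add: vec_eq_iff power2_eq_square algebra_simps)

lemma upd_mean_eq:
  assumes "\<And>i. \<alpha> $ i > 0"
  shows "upd_Phi P R H V \<alpha> *v xbar + upd_E P R H V *v upd_c R H V \<alpha> xbar z
    = xbar + (upd_E P R H V ** diag_mat (\<chi> i. 1 / (1 + \<alpha> $ i)) ** transpose V ** Rih R)
        *v (z - H *v xbar)"
proof -
  define zt where "zt = transpose V *v (Rih R *v z)"
  define xt where "xt = upd_Ft R H V *v xbar"
  have "upd_Phi P R H V \<alpha> *v xbar + upd_E P R H V *v upd_c R H V \<alpha> xbar z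
      = xbar + upd_E P R H V *v (upd_Omega \<alpha> *v xt + upd_c R H V \<alpha> xbar z)"
    unfolding upd_Phi_def xt_def
    by (simp add: matrix_vector_mult_add_rdistrib matrix_vector_right_distrib
        matrix_vector_mul_assoc matrix_mul_assoc)
  also have "upd_Omega \<alpha> *v xt + upd_c R H V \<alpha> xbar z
      = diag_mat (\<chi> i. 1 / (1 + \<alpha> $ i)) *v (zt - xt)"
    unfolding upd_Omega_def upd_c_def diag_mat_mult_vector Let_def zt_def[symmetric] xt_def[symmetric]
    using update_gain_mean_scalar[OF assms] by (simp add: vec_eq_iff)
  also have "zt - xt = (transpose V ** Rih R) *v (z - H *v xbar)"
    unfolding zt_def xt_def upd_Ft_def
    by (simp add: matrix_vector_mult_diff_distrib matrix_vector_mul_assoc)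
  finally show ?thesis
    by (simp add: matrix_vector_mul_assoc matrix_mul_assoc)
qed

lemma upd_Phi_covariance:
  assumes P: "transpose P = P" and T: "transpose (Rih R) = Rih R" and V: "orthogonal_matrix V"
    and D: "Rih R ** H ** P ** transpose H ** Rih R = V ** diag_mat \<alpha> ** transpose V"
    and \<alpha>: "\<And>i. \<alpha> $ i > 0"
  shows "upd_Phi P R H V \<alpha> ** P ** transpose (upd_Phi P R H V \<alpha>)
    = P - P ** transpose H
        ** (Rih R ** V ** diag_mat (\<chi> i. 1 / (1 + \<alpha> $ i)) ** transpose V ** Rih R) ** H ** P"
proof -
  have VV: "transpose V ** V = mat 1"
    using V unfolding orthogonal_matrix_def by auto
  define W where "W = transpose H ** Rih R ** V"
  have Wt: "transpose W = transpose V ** Rih R ** H"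
    unfolding W_def by (simp add: matrix_transpose_mul T matrix_mul_assoc)
  have "upd_Phi P R H V \<alpha> = mat 1 + P ** W ** upd_Omega \<alpha> ** transpose W"
    unfolding upd_Phi_def upd_E_def upd_Ft_def Wt by (simp add: W_def matrix_mul_assoc)
  moreover have "transpose W ** P ** W = transpose V ** (Rih R ** H ** P ** transpose H ** Rih R) ** V"
    unfolding Wt unfolding W_def by (simp add: matrix_mul_assoc)
  then have "transpose W ** P ** W = diag_mat \<alpha>"
    unfolding D by (simp add: matrix_mul_assoc matrix_mul_cancel_right VV)
  moreover have "transpose (upd_Omega \<alpha>) = upd_Omega \<alpha>"
    unfolding upd_Omega_def by (rule transpose_diag_mat)
  ultimately have "upd_Phi P R H V \<alpha> ** P ** transpose (upd_Phi P R H V \<alpha>)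
      = P - P ** W ** diag_mat (\<chi> i. 1 / (1 + \<alpha> $ i)) ** transpose W ** P"
    using low_rank_update_congruence[OF P _ _ upd_Omega_quadratic[OF \<alpha>]] by simp
  then show ?thesis
    unfolding Wt by (simp add: W_def matrix_mul_assoc)
qed

section \<open>Mean and covariance of affine images\<close>

lemma integrable_vec_nth:
  fixes X :: "'s \<Rightarrow> real^'n"
  assumes "integrable M X"
  shows "integrable M (\<lambda>w. X w $ i)"
  using integrable_inner_left[OF assms, of "axis i 1"] by (simp add: inner_axis)

lemma integrable_mult_of_square_integrable:
  fixes f g :: "'s \<Rightarrow> real"
  assumes "f \<in> borel_measurable M" "g \<in> borel_measurable M"
    and "integrable M (\<lambda>w. (f w)^2)" "integrable M (\<lambda>w. (g w)^2)"
  shows "integrable M (\<lambda>w. f w * g w)"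
proof (rule Bochner_Integration.integrable_bound)
  show "integrable M (\<lambda>w. (f w)^2 + (g w)^2)"
    using assms by simp
  show "(\<lambda>w. f w * g w) \<in> borel_measurable M"
    using assms by measurable
  have "\<bar>f w * g w\<bar> \<le> (f w)^2 + (g w)^2" for w
  proof -
    have "2 * (\<bar>f w\<bar> * \<bar>g w\<bar>) \<le> (f w)^2 + (g w)^2"
      using sum_squares_bound[of "\<bar>f w\<bar>" "\<bar>g w\<bar>"] by (simp add: mult.assoc)
    moreover have "0 \<le> \<bar>f w\<bar> * \<bar>g w\<bar>"
      by simp
    ultimately show ?thesis
      unfolding abs_mult by linarith
  qed
  then show "AE w in M. norm (f w * g w) \<le> norm ((f w)^2 + (g w)^2)"
    by simp
qed

lemma mean_vec_affine:
  fixes X :: "'s \<Rightarrow> real^'n" and A :: "real^'n^'m"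
  assumes "prob_space M" "integrable M X"
  shows "mean_vec M (\<lambda>w. A *v X w + b) = A *v mean_vec M X + b"
proof -
  interpret prob_space M by fact
  have "integrable M (\<lambda>w. A *v X w)"
    using assms(2) by (rule integrable_bounded_linear[OF matrix_vector_mul_bounded_linear])
  then show ?thesis
    using integral_bounded_linear[OF matrix_vector_mul_bounded_linear assms(2), of A]
    unfolding mean_vec_def by (simp add: prob_space)
qed

lemma cov_mat_affine:
  fixes X :: "'s \<Rightarrow> real^'n" and A :: "real^'n^'m"
  assumes M: "prob_space M" and X: "integrable M X"
    and X_sq: "\<And>i. integrable M (\<lambda>w. (X w $ i)^2)"
  shows "cov_mat M (\<lambda>w. A *v X w + b) = A ** cov_mat M X ** transpose A"
proof -
  interpret prob_space M by fact
  define Y where "Y w = X w - mean_vec M X" for w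
  have Y_int: "integrable M (\<lambda>w. Y w $ k * Y w $ l)" for k l
  proof -
    have sq: "integrable M (\<lambda>w. (Y w $ k)^2)" for k
      using X_sq[of k] integrable_vec_nth[OF X, of k]
      unfolding Y_def by (simp add: power2_diff)
    have meas: "(\<lambda>w. Y w $ k) \<in> borel_measurable M" for k
      using integrable_vec_nth[OF X, of k] unfolding Y_def by simp
    show ?thesis
      by (rule integrable_mult_of_square_integrable[OF meas meas sq sq])
  qed
  have centered: "(A *v X w + b) $ i - mean_vec M (\<lambda>w. A *v X w + b) $ i = (\<Sum>k\<in>UNIV. A $ i $ k * Y w $ k)"
    for w i
    unfolding mean_vec_affine[OF M X] Y_def
    by (simp add: matrix_vector_mult_def sum_subtractf[symmetric] right_diff_distrib)
  have "cov_mat M (\<lambda>w. A *v X w + b) $ i $ j = (A ** cov_mat M X ** transpose A) $ i $ j" for i j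
  proof -
    have "cov_mat M (\<lambda>w. A *v X w + b) $ i $ j
        = integral\<^sup>L M (\<lambda>w. \<Sum>k\<in>UNIV. \<Sum>l\<in>UNIV. A $ i $ k * A $ j $ l * (Y w $ k * Y w $ l))"
      unfolding cov_mat_def centered by (simp add: sum_product mult_ac)
    also have "\<dots> = (\<Sum>k\<in>UNIV. \<Sum>l\<in>UNIV. A $ i $ k * A $ j $ l * cov_mat M X $ k $ l)"
      using Y_int by (simp add: cov_mat_def Y_def)
    also have "\<dots> = (A ** cov_mat M X ** transpose A) $ i $ j"
      by (simp add: matrix_matrix_mult_def transpose_def sum_distrib_left sum_distrib_right mult_ac)
        (rule sum.swap)
    finally show ?thesis .
  qed
  then show ?thesis
    by (simp add: vec_eq_iff)
qed

theorem theorem1: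
  fixes P :: "real^'x^'x" and R :: "real^'z^'z" and H :: "real^'x^'z"
    and xbar :: "real^'x" and z :: "real^'z"
    and M :: "'s measure" and x0 :: "'s \<Rightarrow> real^'x"
    and V :: "real^'z^'z" and \<alpha> :: "real^'z"
  assumes P_spd: "pos_def_matrix P"
    and R_spd: "pos_def_matrix R"
    and H_rank: "rank H = CARD('z)"
    and M_prob: "prob_space M"
    and x0_int: "integrable M x0"
    and x0_sq_int: "\<And>i. integrable M (\<lambda>w. (x0 w $ i)^2)"
    and x0_mean: "mean_vec M x0 = xbar"
    and x0_cov: "cov_mat M x0 = P"
    and V_orth: "orthogonal_matrix V"
    and D_eig: "Rih R ** H ** P ** transpose H ** Rih R
                  = V ** diag_mat \<alpha> ** transpose V"
    and \<alpha>_pos: "\<And>i. \<alpha> $ i > 0"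
  defines "\<Phi> \<equiv> upd_Phi P R H V \<alpha>"
    and "x1 \<equiv> (\<lambda>w. upd_Phi P R H V \<alpha> *v x0 w + upd_E P R H V *v upd_c R H V \<alpha> xbar z)"
  shows "mean_vec M x1 = xbar + (P ** transpose H ** matrix_inv (H ** P ** transpose H + R)) *v (z - H *v xbar)
         \<and> cov_mat M x1 = \<Phi> ** P ** transpose \<Phi>
         \<and> \<Phi> ** P ** transpose \<Phi> = P - P ** transpose H ** matrix_inv (H ** P ** transpose H + R) ** H ** P"
proof -
  have sqrt_R: "matrix_sqrt R ** matrix_sqrt R = R"
    using matrix_sqrt_spec[OF R_spd] by blast
  define K where "K = Rih R ** V ** diag_mat (\<chi> i. 1 / (1 + \<alpha> $ i)) ** transpose V ** Rih R"
  have "1 + \<alpha> $ i \<noteq> 0" for i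
    using \<alpha>_pos[of i] by simp
  then have inv: "matrix_inv (H ** P ** transpose H + R) = K"
    unfolding K_def using D_eig
    by (intro matrix_inv_congruent_diag_sum[OF Rih_inverse_sqrt(1,2)[OF R_spd] sqrt_R V_orth])
      (simp_all add: matrix_mul_assoc)
  have "mean_vec M x1 = \<Phi> *v xbar + upd_E P R H V *v upd_c R H V \<alpha> xbar z"
    unfolding x1_def \<Phi>_def by (simp add: mean_vec_affine[OF M_prob x0_int] x0_mean)
  also have "\<dots> = xbar + (P ** transpose H ** K) *v (z - H *v xbar)"
    unfolding \<Phi>_def upd_mean_eq[OF \<alpha>_pos] by (simp add: K_def upd_E_def matrix_mul_assoc)
  finally have mean: "mean_vec M x1 = xbar + (P ** transpose H ** K) *v (z - H *v xbar)" .
  have cov: "cov_mat M x1 = \<Phi> ** P ** transpose \<Phi>"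
    unfolding x1_def \<Phi>_def using cov_mat_affine[OF M_prob x0_int x0_sq_int] x0_cov by simp
  have "\<Phi> ** P ** transpose \<Phi> = P - P ** transpose H ** K ** H ** P"
    unfolding \<Phi>_def K_def using P_spd
    by (intro upd_Phi_covariance[OF _ Rih_inverse_sqrt(3)[OF R_spd] V_orth D_eig \<alpha>_pos])
      (simp add: pos_def_matrix_def)
  with mean cov inv show ?thesis
    by simp
qed

end
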